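(* Let $a$ and $c$ be coprime positive odd integers. Then for every integer $p\geq1$ and all $x,z\in\mathbb{R}$, $$ac^{p}S^{(5)}_{p}(a,c:x,z)+ca^{p}S^{(5)}_{p}(c,a:z,x)=-\frac{1}{2}\sum_{j=1}^{p}\binom{p-1}{j-1}a^{p+1-j}c^{j}\mathcal{E}_{p-j}(z)\mathcal{E}_{j-1}(x)+\mathcal{E}_{p}(az+cx).$$
   Context: $B_n(x)$ is the $n$th Bernoulli polynomial ($\frac{te^{xt}}{e^t-1}=\sum B_n(x)\frac{t^n}{n!}$) and $\mathcal{B}_n(x)=B_n(x-[x])$ the $n$th Bernoulli function ($[x]$ the largest integer $\le x$). $E_n(x)$ is the $n$th Euler polynomial ($\frac{2e^{xt}}{e^t+1}=\sum E_n(x)\frac{t^n}{n!}$), and the Euler function $\mathcal{E}_n$ ($n\ge0$) is defined by $\mathcal{E}_n(x)=E_n(x)$ for $0\le x<1$ and $\mathcal{E}_n(x+m)=(-1)^m\mathcal{E}_n(x)$ for $m\in\mathbb{Z}$. For positive integers $a,c$, an integer $p\ge1$ and real $x,z$, define $$S^{(5)}_{p}(a,c:x,z)=\sum_{\mu=0}^{c-1}(-1)^{\mu}\mathcal{E}_{p-1}\Big(a\frac{\mu+z}{c}+x\Big)\mathcal{B}_{1}\Big(\frac{\mu+z}{c}\Big).$$ *)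

theory Defs
  imports "HOL-Analysis.Analysis"
begin

(* Bernoulli numbers via te^{xt}/(e^t-1) at x=0: B_0 = 1, sum_{k<=n} C(n+1,k) B_k = 0 *)
fun bernoulli_num :: "nat \<Rightarrow> real" where
  "bernoulli_num n = (if n = 0 then 1 else
     - (\<Sum>k<n. real ((Suc n) choose k) * (if k < n then bernoulli_num k else 0)) / real (Suc n))"

definition bernoulli_poly :: "nat \<Rightarrow> real \<Rightarrow> real" where
  "bernoulli_poly n x = (\<Sum>k\<le>n. real (n choose k) * bernoulli_num k * x ^ (n - k))"

definition bernoulli_fun :: "nat \<Rightarrow> real \<Rightarrow> real" where
  "bernoulli_fun n x = bernoulli_poly n (x - of_int \<lfloor>x\<rfloor>)"

(* Euler polynomials from 2e^{xt}/(e^t+1): E_n(x) + sum_{k<=n} C(n,k) E_k(x) = 2 x^n *)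
fun euler_poly :: "nat \<Rightarrow> real \<Rightarrow> real" where
  "euler_poly n x = x ^ n -
     (\<Sum>k<n. real (n choose k) * (if k < n then euler_poly k x else 0)) / 2"

definition euler_fun :: "nat \<Rightarrow> real \<Rightarrow> real" where
  "euler_fun n x = (-1) powi \<lfloor>x\<rfloor> * euler_poly n (x - of_int \<lfloor>x\<rfloor>)"

definition S5 :: "nat \<Rightarrow> nat \<Rightarrow> nat \<Rightarrow> real \<Rightarrow> real \<Rightarrow> real" where
  "S5 p a c x z = (\<Sum>\<mu><c. (-1) ^ \<mu> *
      euler_fun (p - 1) (real a * ((real \<mu> + z) / real c) + x) *
      bernoulli_fun 1 ((real \<mu> + z) / real c))"

end

(*
  Both sides are antiperiodic with period 1 in x and in z, because a and c are odd, so it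
  suffices to take x, z in [0, 1). There, with w = a z + c x, the Bernoulli factors are
  linear, the multiplication formula for the Euler functions absorbs the inner sums, and the
  difference of the two sides becomes a function D_n(w) on [0, a + c) (p = n + 1).

  All ingredients of D are Appell families on every cell between consecutive integers, so
  D_n(W + t) = sum_k C(n, k) D_k(W) t^(n - k). By induction on n, D_n is constant on
  [0, a + c): in positive degree the Euler functions are continuous at the integers, and in
  degree 0 the jumps of the two Dedekind-type sums at an integer W cancel, because the unique
  indices mu < c, nu < a at which they jump satisfy a mu + c nu + W + 1 = a c. Finally
  D_n(a z + c) = - D_n(a z), so the constant is 0.
*)
theory Submission
  imports Defs "HOL-Computational_Algebra.Formal_Power_Series"
begin

declare euler_poly.simps [simp del] bernoulli_num.simps [simp del]

section \<open>Exponential generating functions and Appell sequences\<close>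

definition egf :: "(nat \<Rightarrow> real) \<Rightarrow> real fps" where
  "egf u = Abs_fps (\<lambda>n. u n / fact n)"

lemma egf_nth [simp]: "fps_nth (egf u) n = u n / fact n"
  by (simp add: egf_def)

lemma egf_eq_iff: "egf u = egf v \<longleftrightarrow> u = v"
  by (auto simp: fps_eq_iff fun_eq_iff)

lemma egf_add: "egf u + egf v = egf (\<lambda>n. u n + v n)"
  by (simp add: fps_eq_iff add_divide_distrib)

lemma egf_cmult: "fps_const c * egf u = egf (\<lambda>n. c * u n)"
  by (simp add: fps_eq_iff)

lemma egf_sum: "egf (\<lambda>n. \<Sum>k\<in>K. u k n) = (\<Sum>k\<in>K. egf (u k))"
  by (simp add: fps_eq_iff fps_sum_nth sum_divide_distrib)

lemma fps_exp_eq_egf: "fps_exp h = egf (\<lambda>n. h ^ n)"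
  by (simp add: fps_eq_iff)

lemma egf_mult: "egf u * egf v = egf (\<lambda>n. \<Sum>k\<le>n. real (n choose k) * u k * v (n - k))"
proof -
  have "u k / fact k * (v (n - k) / fact (n - k)) = real (n choose k) * u k * v (n - k) / fact n"
    if "k \<le> n" for n k
  proof -
    have eq: "real (n choose k) / fact n = 1 / (fact k * fact (n - k))"
      using binomial_fact[OF that, where 'a=real] by (simp add: field_simps)
    have "u k / fact k * (v (n - k) / fact (n - k)) = u k * v (n - k) * (1 / (fact k * fact (n - k)))"
      by simp
    also have "\<dots> = u k * v (n - k) * (real (n choose k) / fact n)"
      by (simp only: eq)
    finally show ?thesis
      by simp
  qed
  then have "(\<Sum>k\<le>n. u k / fact k * (v (n - k) / fact (n - k))) =
      (\<Sum>k\<le>n. real (n choose k) * u k * v (n - k)) / fact n" for n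
    unfolding sum_divide_distrib by (intro sum.cong) auto
  then show ?thesis
    unfolding fps_eq_iff fps_mult_nth atLeast0AtMost egf_nth by blast
qed

definition appell :: "(nat \<Rightarrow> real \<Rightarrow> real) \<Rightarrow> bool" where
  "appell f \<longleftrightarrow> (\<forall>x h. egf (\<lambda>n. f n (x + h)) = egf (\<lambda>n. f n x) * fps_exp h)"

lemma appell_iff:
  "appell f \<longleftrightarrow> (\<forall>n x h. f n (x + h) = (\<Sum>k\<le>n. real (n choose k) * f k x * h ^ (n - k)))"
  by (auto simp: appell_def fps_exp_eq_egf egf_mult egf_eq_iff fun_eq_iff)

lemma appellD: "appell f \<Longrightarrow> f n (x + h) = (\<Sum>k\<le>n. real (n choose k) * f k x * h ^ (n - k))"
  by (simp add: appell_iff)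

lemma appell_shift: "appell f \<Longrightarrow> appell (\<lambda>n y. f n (y + s))"
proof -
  assume "appell f"
  then have "egf (\<lambda>n. f n ((x + s) + h)) = egf (\<lambda>n. f n (x + s)) * fps_exp h" for x h
    unfolding appell_def by blast
  then show ?thesis
    unfolding appell_def by (simp add: add_ac)
qed

lemma appell_cmult: "appell f \<Longrightarrow> appell (\<lambda>n y. c * f n y)"
  by (simp add: appell_def egf_cmult[symmetric] mult.assoc)

lemma appell_sum: "(\<And>k. k \<in> K \<Longrightarrow> appell (f k)) \<Longrightarrow> appell (\<lambda>n y. \<Sum>k\<in>K. f k n y)"
  by (simp add: appell_def egf_sum sum_distrib_right)

lemma binomial_sum_rescale:
  assumes "m \<noteq> 0"
  shows "m ^ n * (\<Sum>k\<le>n. real (n choose k) * u k * (h / m) ^ (n - k)) =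
         (\<Sum>k\<le>n. real (n choose k) * (m ^ k * u k) * h ^ (n - k))"
  unfolding sum_distrib_left
proof (intro sum.cong refl)
  fix k assume "k \<in> {..n}"
  then have "m ^ n = m ^ k * m ^ (n - k)"
    by (simp flip: power_add)
  then have "m ^ n * (h / m) ^ (n - k) = m ^ k * h ^ (n - k)"
    using assms by (simp add: power_divide)
  then show "m ^ n * (real (n choose k) * u k * (h / m) ^ (n - k)) =
      real (n choose k) * (m ^ k * u k) * h ^ (n - k)"
    by (metis (no_types, lifting) mult.assoc mult.left_commute)
qed

lemma appell_rescale: "m \<noteq> 0 \<Longrightarrow> appell f \<Longrightarrow> appell (\<lambda>n y. m ^ n * f n (y / m))"
  by (simp add: appell_iff add_divide_distrib binomial_sum_rescale)

lemma appell_convolution: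
  assumes "appell f"
  shows "appell (\<lambda>n y. \<Sum>k\<le>n. real (n choose k) * \<alpha> k * f (n - k) y)"
  unfolding appell_def
proof (intro allI)
  fix x h
  have "egf (\<lambda>n. \<Sum>k\<le>n. real (n choose k) * \<alpha> k * f (n - k) (x + h)) =
        egf \<alpha> * egf (\<lambda>n. f n (x + h))"
    by (simp add: egf_mult)
  also have "\<dots> = egf \<alpha> * egf (\<lambda>n. f n x) * fps_exp h"
    using assms by (simp add: appell_def mult.assoc)
  also have "egf \<alpha> * egf (\<lambda>n. f n x) = egf (\<lambda>n. \<Sum>k\<le>n. real (n choose k) * \<alpha> k * f (n - k) x)"
    by (simp add: egf_mult)
  finally show "egf (\<lambda>n. \<Sum>k\<le>n. real (n choose k) * \<alpha> k * f (n - k) (x + h)) =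
      egf (\<lambda>n. \<Sum>k\<le>n. real (n choose k) * \<alpha> k * f (n - k) x) * fps_exp h" .
qed

section \<open>Euler polynomials\<close>

lemma egf_times_exp1_plus1:
  "egf u * (fps_exp 1 + 1) = egf (\<lambda>n. u n + (\<Sum>k\<le>n. real (n choose k) * u k))"
  by (simp add: fps_exp_eq_egf egf_mult distrib_left add.commute flip: egf_add)

lemma fps_exp1_plus1_nonzero: "fps_exp 1 + 1 \<noteq> (0 :: real fps)"
proof
  assume "fps_exp 1 + 1 = (0 :: real fps)"
  then have "fps_nth (fps_exp 1 + 1) 0 = (0 :: real)"
    by simp
  then show False
    by simp
qed

lemma euler_poly_recurrence:
  "euler_poly n x + (\<Sum>k\<le>n. real (n choose k) * euler_poly k x) = 2 * x ^ n"
proof -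
  have "(\<Sum>k<n. real (n choose k) * (if k < n then euler_poly k x else 0)) =
        (\<Sum>k<n. real (n choose k) * euler_poly k x)"
    by (intro sum.cong) auto
  then have "euler_poly n x = x ^ n - (\<Sum>k<n. real (n choose k) * euler_poly k x) / 2"
    by (subst euler_poly.simps[of n x]) simp
  then show ?thesis
    by (simp add: lessThan_Suc_atMost[symmetric])
qed

lemma egf_euler_poly: "egf (\<lambda>n. euler_poly n x) * (fps_exp 1 + 1) = fps_const 2 * fps_exp x"
  unfolding egf_times_exp1_plus1 euler_poly_recurrence by (simp add: fps_exp_eq_egf egf_cmult)

lemma appell_euler_poly: "appell euler_poly"
  unfolding appell_def
proof (intro allI)
  fix x h
  have "egf (\<lambda>n. euler_poly n (x + h)) * (fps_exp 1 + 1) = fps_const 2 * fps_exp x * fps_exp h"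
    by (simp add: egf_euler_poly fps_exp_add_mult mult.assoc)
  also have "\<dots> = egf (\<lambda>n. euler_poly n x) * (fps_exp 1 + 1) * fps_exp h"
    by (simp only: egf_euler_poly)
  also have "\<dots> = egf (\<lambda>n. euler_poly n x) * fps_exp h * (fps_exp 1 + 1)"
    by (simp only: ac_simps)
  finally show "egf (\<lambda>n. euler_poly n (x + h)) = egf (\<lambda>n. euler_poly n x) * fps_exp h"
    using fps_exp1_plus1_nonzero by simp
qed

lemma appell_eq_euler_poly:
  assumes "appell f" and "\<And>n t. f n (t + 1) + f n t = 2 * t ^ n"
  shows "f n t = euler_poly n t"
proof -
  have "egf (\<lambda>n. f n t) * (fps_exp 1 + 1) = egf (\<lambda>n. f n t + f n (t + 1))"
    using appellD[OF assms(1), of _ t 1] by (simp add: egf_times_exp1_plus1)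
  also have "(\<lambda>n. f n t + f n (t + 1)) = (\<lambda>n. 2 * t ^ n)"
    unfolding fun_eq_iff using assms(2) by (metis add.commute)
  also have "egf (\<lambda>n. 2 * t ^ n) = fps_const 2 * fps_exp t"
    by (simp add: fps_exp_eq_egf egf_cmult)
  also have "\<dots> = egf (\<lambda>n. euler_poly n t) * (fps_exp 1 + 1)"
    by (simp only: egf_euler_poly)
  finally show ?thesis
    using fps_exp1_plus1_nonzero by (simp add: egf_eq_iff fun_eq_iff)
qed

lemma euler_poly_add:
  "euler_poly n (x + h) = (\<Sum>k\<le>n. real (n choose k) * euler_poly k x * h ^ (n - k))"
  by (rule appellD[OF appell_euler_poly])

lemma euler_poly_add_1: "euler_poly n (x + 1) + euler_poly n x = 2 * x ^ n"
  using euler_poly_recurrence[of n x] euler_poly_add[of n x 1] by simp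

lemma euler_poly_1: "0 < n \<Longrightarrow> euler_poly n 1 = - euler_poly n 0"
  using euler_poly_add_1[of n 0] by (simp add: power_0_left)

lemma euler_poly_0 [simp]: "euler_poly 0 x = 1"
  by (subst euler_poly.simps) simp

lemma euler_poly_1_0: "euler_poly 1 0 = - 1 / 2"
  using euler_poly_recurrence[of 1 0] by simp

lemma euler_poly_mult_odd:
  assumes "odd m"
  shows "(\<Sum>k<m. (-1) ^ k * euler_poly n ((t + real k) / real m)) = euler_poly n t / real m ^ n"
proof -
  have m: "real m \<noteq> 0"
    using assms by (auto elim: oddE)
  define G where "G n t = (\<Sum>k<m. (-1) ^ k * (real m ^ n * euler_poly n ((t + real k) / real m)))"
    for n t
  have scaled: "appell (\<lambda>n y. real m ^ n * euler_poly n (y / real m))"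
    by (rule appell_rescale[OF m appell_euler_poly])
  have "appell G"
    unfolding G_def by (intro appell_sum appell_cmult appell_shift[OF scaled])
  moreover have "G n (t + 1) + G n t = 2 * t ^ n" for n t
  proof -
    define u where "u k = (-1) ^ k * euler_poly n ((t + real k) / real m)" for k
    have "G n (t + 1) = - (real m ^ n * (\<Sum>k<m. u (Suc k)))"
      by (simp add: G_def u_def sum_distrib_left add_ac mult.left_commute flip: sum_negf)
    moreover have "G n t = real m ^ n * (\<Sum>k<m. u k)"
      by (simp add: G_def u_def sum_distrib_left mult.left_commute)
    moreover have "u 0 - u m = 2 * (t / real m) ^ n"
    proof -
      have "(t + real m) / real m = t / real m + 1"
        using m by (simp add: field_simps)
      then show ?thesis
        using assms euler_poly_add_1[of n "t / real m"] by (simp add: u_def)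
    qed
    ultimately have "G n (t + 1) + G n t = real m ^ n * (2 * (t / real m) ^ n)"
      using sum_lessThan_telescope'[of u m] by (simp add: algebra_simps sum_subtractf)
    then show ?thesis
      using m by (simp add: power_divide)
  qed
  ultimately have "G n t = euler_poly n t"
    by (rule appell_eq_euler_poly)
  then show ?thesis
    using m by (simp add: G_def sum_distrib_left field_simps)
qed

section \<open>Euler and Bernoulli functions\<close>

lemma euler_fun_add_int: "euler_fun n (y + of_int k) = (-1) powi k * euler_fun n y"
  by (simp add: euler_fun_def power_int_add)

lemma euler_fun_add_nat: "euler_fun n (y + real k) = (-1) ^ k * euler_fun n y"
  using euler_fun_add_int[of n y "int k"] by simp

lemma euler_fun_add_1: "euler_fun n (y + 1) = - euler_fun n y"
  using euler_fun_add_nat[of n y 1] by simp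

lemma euler_fun_eq_euler_poly:
  assumes "0 \<le> y" "y < 1"
  shows "euler_fun n y = euler_poly n y"
proof -
  have "\<lfloor>y\<rfloor> = 0"
    using assms by (simp add: floor_eq_iff)
  then show ?thesis
    by (simp add: euler_fun_def)
qed

lemma euler_fun_of_nat: "euler_fun n (real k) = (-1) ^ k * euler_poly n 0"
  by (simp add: euler_fun_def)

lemma euler_fun_add_within_cell:
  assumes "of_int \<lfloor>y\<rfloor> \<le> y + h"
    and "y + h < of_int \<lfloor>y\<rfloor> + 1 \<or> y + h = of_int \<lfloor>y\<rfloor> + 1 \<and> 0 < n"
  shows "euler_fun n (y + h) = (\<Sum>k\<le>n. real (n choose k) * euler_fun k y * h ^ (n - k))"
proof -
  have taylor: "(\<Sum>k\<le>n. real (n choose k) * euler_fun k y * h ^ (n - k)) =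
      (-1) powi \<lfloor>y\<rfloor> * euler_poly n (y - of_int \<lfloor>y\<rfloor> + h)"
    by (simp add: euler_fun_def euler_poly_add sum_distrib_left mult_ac)
  from assms(2) show ?thesis
  proof
    assume "y + h < of_int \<lfloor>y\<rfloor> + 1"
    then have "\<lfloor>y + h\<rfloor> = \<lfloor>y\<rfloor>"
      using assms(1) by (simp add: floor_eq_iff)
    then show ?thesis
      unfolding taylor by (simp add: euler_fun_def algebra_simps)
  next
    assume edge: "y + h = of_int \<lfloor>y\<rfloor> + 1 \<and> 0 < n"
    then have cell_end: "y - of_int \<lfloor>y\<rfloor> + h = 1"
      by simp
    have "euler_fun n (y + h) = - ((-1) powi \<lfloor>y\<rfloor> * euler_poly n 0)"
      using edge euler_fun_add_int[of n 0 "\<lfloor>y\<rfloor> + 1"] by (simp add: euler_fun_def power_int_add)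
    then show ?thesis
      unfolding taylor cell_end using edge by (simp add: euler_poly_1)
  qed
qed

lemma bernoulli_fun_1: "bernoulli_fun 1 y = frac y - 1 / 2"
proof -
  have "bernoulli_num 0 = 1"
    by (simp add: bernoulli_num.simps)
  moreover have "bernoulli_num (Suc 0) = - 1 / 2"
    by (simp add: bernoulli_num.simps[of "Suc 0"] \<open>bernoulli_num 0 = 1\<close>)
  ultimately show ?thesis
    by (simp add: bernoulli_fun_def bernoulli_poly_def frac_def)
qed

lemma periodic_add_mult:
  fixes g :: "int \<Rightarrow> real"
  assumes "\<And>k. g (k + m) = g k"
  shows "g (k + q * m) = g k"
proof (induction q rule: int_induct[of _ 0])
  case (step1 i)
  then show ?case
    using assms[of "k + i * m"] by (simp add: algebra_simps)
next
  case (step2 i)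
  then show ?case
    using assms[of "k + (i - 1) * m"] by (simp add: algebra_simps)
qed simp

lemma bij_betw_affine_mod:
  assumes "0 < m" "coprime b m"
  shows "bij_betw (\<lambda>\<mu>. nat ((int b * int \<mu> + s) mod int m)) {..<m} {..<m}"
proof -
  let ?h = "\<lambda>\<mu>. nat ((int b * int \<mu> + s) mod int m)"
  have "inj_on ?h {..<m}"
  proof (rule inj_onI)
    fix \<mu> \<nu> assume "\<mu> \<in> {..<m}" "\<nu> \<in> {..<m}" "?h \<mu> = ?h \<nu>"
    then have "(int b * int \<mu> + s) mod int m = (int b * int \<nu> + s) mod int m"
      using assms(1) by (simp add: eq_nat_nat_iff)
    then have "int m dvd (int b * int \<mu> + s) - (int b * int \<nu> + s)"
      by (simp only: mod_eq_dvd_iff)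
    then have "int m dvd int b * (int \<mu> - int \<nu>)"
      by (simp add: algebra_simps)
    then have "int m dvd int \<mu> - int \<nu>"
      using assms(2) by (simp add: coprime_dvd_mult_right_iff coprime_commute[of m b])
    with \<open>\<mu> \<in> {..<m}\<close> \<open>\<nu> \<in> {..<m}\<close> show "\<mu> = \<nu>"
      by (simp add: mod_eq_dvd_iff[symmetric])
  qed
  moreover have "?h ` {..<m} \<subseteq> {..<m}"
    using assms(1) by (auto simp: nat_less_iff)
  ultimately show ?thesis
    by (simp add: bij_betw_def endo_inj_surj)
qed

lemma sum_periodic_affine:
  fixes g :: "int \<Rightarrow> real"
  assumes "0 < m" "coprime b m" and periodic: "\<And>k. g (k + int m) = g k"
  shows "(\<Sum>\<mu><m. g (int b * int \<mu> + s)) = (\<Sum>\<nu><m. g (int \<nu>))"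
proof -
  have "g k = g (k mod int m)" for k
    using periodic_add_mult[of g "int m", OF periodic, of "k mod int m" "k div int m"] by simp
  then have "(\<Sum>\<mu><m. g (int b * int \<mu> + s)) =
      (\<Sum>\<mu><m. g (int (nat ((int b * int \<mu> + s) mod int m))))"
    using assms(1) by simp
  also have "\<dots> = (\<Sum>\<nu><m. g (int \<nu>))"
    using sum.reindex_bij_betw[OF bij_betw_affine_mod[OF assms(1,2)], of "\<lambda>\<nu>. g (int \<nu>)"] by simp
  finally show ?thesis .
qed

lemma euler_fun_mult_odd:
  assumes "odd m" "odd b" "coprime b m"
  shows "(\<Sum>\<mu><m. (-1) ^ \<mu> * euler_fun n ((real b * real \<mu> + w) / real m)) = euler_fun n w / real m ^ n"
proof -
  have m: "0 < m"
    using assms(1) by (auto elim: oddE)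
  define g where "g k = (-1) powi k * euler_fun n ((of_int k + w) / real m)" for k
  have periodic: "g (k + int m) = g k" for k
  proof -
    have "(of_int (k + int m) + w) / real m = (of_int k + w) / real m + 1"
      using m by (simp add: field_simps)
    then show ?thesis
      using assms(1) by (simp add: g_def power_int_add euler_fun_add_1)
  qed
  have "(\<Sum>\<mu><m. (-1) ^ \<mu> * euler_fun n ((real b * real \<mu> + w) / real m)) =
        (\<Sum>\<mu><m. g (int b * int \<mu> + 0))"
  proof (intro sum.cong refl)
    fix \<mu>
    have "(-1::real) ^ (b * \<mu>) = (-1) ^ \<mu>"
      using assms(2) by (simp add: power_mult)
    then show "(-1) ^ \<mu> * euler_fun n ((real b * real \<mu> + w) / real m) = g (int b * int \<mu> + 0)"
      by (simp add: g_def flip: of_nat_mult)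
  qed
  also have "\<dots> = (\<Sum>\<nu><m. g (int \<nu>))"
    by (rule sum_periodic_affine[of m b g 0, OF m assms(3) periodic])
  also have "\<dots> = (\<Sum>\<mu><m. g (int \<mu> - \<lfloor>w\<rfloor>))"
    using sum_periodic_affine[of m 1 g "- \<lfloor>w\<rfloor>", OF m _ periodic] by simp
  also have "\<dots> = (-1) powi \<lfloor>w\<rfloor> * (\<Sum>\<mu><m. (-1) ^ \<mu> * euler_poly n ((frac w + real \<mu>) / real m))"
    unfolding sum_distrib_left
  proof (intro sum.cong refl)
    fix \<mu> assume "\<mu> \<in> {..<m}"
    then have "(frac w + real \<mu>) / real m < 1"
      using frac_lt_1[of w] by (simp add: field_simps)
    then have "euler_fun n ((frac w + real \<mu>) / real m) = euler_poly n ((frac w + real \<mu>) / real m)"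
      by (simp add: euler_fun_eq_euler_poly)
    moreover have "(-1::real) powi (int \<mu> - \<lfloor>w\<rfloor>) = (-1) powi \<lfloor>w\<rfloor> * (-1) ^ \<mu>"
      using power_int_add[of "-1::real" "int \<mu>" "- \<lfloor>w\<rfloor>"] by (simp add: power_int_minus_one_minus)
    ultimately show "g (int \<mu> - \<lfloor>w\<rfloor>) =
        (-1) powi \<lfloor>w\<rfloor> * ((-1) ^ \<mu> * euler_poly n ((frac w + real \<mu>) / real m))"
      by (simp add: g_def frac_def algebra_simps)
  qed
  also have "\<dots> = euler_fun n w / real m ^ n"
    using euler_poly_mult_odd[OF assms(1), of n "frac w"] by (simp add: euler_fun_def frac_def)
  finally show ?thesis .
qed

section \<open>Piecewise Appell families\<close>

text \<open>Appell on every cell \<open>[W, W + 1]\<close> between consecutive integers, where the right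
  endpoint is only included in positive degree: the degree-0 members are step functions,
  the others are continuous.\<close>
definition piecewise_appell :: "(nat \<Rightarrow> real \<Rightarrow> real) \<Rightarrow> bool" where
  "piecewise_appell f \<longleftrightarrow> (\<forall>W::int. \<forall>n \<omega>. 0 \<le> \<omega> \<longrightarrow> (\<omega> < 1 \<or> \<omega> = 1 \<and> 0 < n) \<longrightarrow>
     f n (of_int W + \<omega>) = (\<Sum>k\<le>n. real (n choose k) * f k (of_int W) * \<omega> ^ (n - k)))"

lemma piecewise_appellD:
  "piecewise_appell f \<Longrightarrow> 0 \<le> \<omega> \<Longrightarrow> \<omega> < 1 \<or> \<omega> = 1 \<and> 0 < n \<Longrightarrow>
    f n (of_int W + \<omega>) = (\<Sum>k\<le>n. real (n choose k) * f k (of_int W) * \<omega> ^ (n - k))"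
  unfolding piecewise_appell_def by blast

lemma appell_imp_piecewise_appell: "appell f \<Longrightarrow> piecewise_appell f"
  by (simp add: piecewise_appell_def appellD)

lemma piecewise_appell_shift:
  assumes "piecewise_appell f" "s \<in> \<int>"
  shows "piecewise_appell (\<lambda>n w. f n (s + w))"
proof -
  from assms(2) obtain j where s: "s = of_int j"
    by (auto elim: Ints_cases)
  show ?thesis
    unfolding piecewise_appell_def s
    using piecewise_appellD[OF assms(1), where W = "j + _"] by (simp add: add.assoc)
qed

lemma piecewise_appell_cmult: "piecewise_appell f \<Longrightarrow> piecewise_appell (\<lambda>n w. c * f n w)"
  by (simp add: piecewise_appell_def sum_distrib_left mult_ac)

lemma piecewise_appell_add:
  "piecewise_appell f \<Longrightarrow> piecewise_appell g \<Longrightarrow> piecewise_appell (\<lambda>n w. f n w + g n w)"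
  by (simp add: piecewise_appell_def sum.distrib distrib_left distrib_right)

lemma piecewise_appell_sum:
  "(\<And>k. k \<in> K \<Longrightarrow> piecewise_appell (f k)) \<Longrightarrow> piecewise_appell (\<lambda>n w. \<Sum>k\<in>K. f k n w)"
proof -
  assume pa: "\<And>k. k \<in> K \<Longrightarrow> piecewise_appell (f k)"
  show ?thesis
    unfolding piecewise_appell_def
  proof (intro allI impI)
    fix W :: int and n :: nat and \<omega> :: real
    assume "0 \<le> \<omega>" "\<omega> < 1 \<or> \<omega> = 1 \<and> 0 < n"
    then have "(\<Sum>k\<in>K. f k n (of_int W + \<omega>)) =
        (\<Sum>k\<in>K. \<Sum>j\<le>n. real (n choose j) * f k j (of_int W) * \<omega> ^ (n - j))"
      using piecewise_appellD[OF pa] by (intro sum.cong) auto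
    also have "\<dots> = (\<Sum>j\<le>n. real (n choose j) * (\<Sum>k\<in>K. f k j (of_int W)) * \<omega> ^ (n - j))"
      unfolding sum_distrib_left sum_distrib_right by (rule sum.swap)
    finally show "(\<Sum>k\<in>K. f k n (of_int W + \<omega>)) =
        (\<Sum>j\<le>n. real (n choose j) * (\<Sum>k\<in>K. f k j (of_int W)) * \<omega> ^ (n - j))" .
  qed
qed

lemma floor_of_int_divide_add_bounds:
  fixes W :: int and m :: nat
  assumes "0 < m" "0 \<le> \<omega>" "\<omega> \<le> 1"
  defines "y \<equiv> of_int W / real m"
  shows "of_int \<lfloor>y\<rfloor> \<le> y + \<omega> / real m"
    and "y + \<omega> / real m \<le> of_int \<lfloor>y\<rfloor> + 1"
    and "\<omega> < 1 \<Longrightarrow> y + \<omega> / real m < of_int \<lfloor>y\<rfloor> + 1"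
proof -
  define q r where "q = W div int m" and "r = W mod int m"
  have "\<lfloor>y\<rfloor> = q"
    using floor_divide_of_int_eq[of W "int m"] by (simp add: y_def q_def)
  moreover have "real_of_int W = of_int q * real m + of_int r"
    unfolding q_def r_def by (metis div_mult_mod_eq of_int_add of_int_mult of_int_of_nat_eq)
  then have "y + \<omega> / real m = of_int q + (of_int r + \<omega>) / real m"
    using assms(1) by (simp add: y_def field_simps)
  moreover have "0 \<le> r" "r < int m"
    using assms(1) by (simp_all add: r_def)
  then have "0 \<le> real_of_int r" "real_of_int (r + 1) \<le> real_of_int (int m)"
    by (simp_all only: of_int_le_iff of_int_0_le_iff)
  ultimately show "of_int \<lfloor>y\<rfloor> \<le> y + \<omega> / real m"
    and "y + \<omega> / real m \<le> of_int \<lfloor>y\<rfloor> + 1"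
    and "\<omega> < 1 \<Longrightarrow> y + \<omega> / real m < of_int \<lfloor>y\<rfloor> + 1"
    using assms(1-3) by (simp_all add: field_simps)
qed

lemma piecewise_appell_euler_fun_rescale:
  assumes "0 < m"
  shows "piecewise_appell (\<lambda>n y. real m ^ n * euler_fun n (y / real m))"
  unfolding piecewise_appell_def
proof (intro allI impI)
  fix W :: int and n :: nat and \<omega> :: real
  assume "0 \<le> \<omega>" and \<omega>: "\<omega> < 1 \<or> \<omega> = 1 \<and> 0 < n"
  define y where "y = of_int W / real m"
  have "euler_fun n (y + \<omega> / real m) =
      (\<Sum>k\<le>n. real (n choose k) * euler_fun k y * (\<omega> / real m) ^ (n - k))"
    using floor_of_int_divide_add_bounds[OF assms \<open>0 \<le> \<omega>\<close>, of W] \<omega>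
    by (intro euler_fun_add_within_cell) (auto simp: y_def)
  then show "real m ^ n * euler_fun n ((of_int W + \<omega>) / real m) =
      (\<Sum>k\<le>n. real (n choose k) * (real m ^ k * euler_fun k (of_int W / real m)) * \<omega> ^ (n - k))"
    using assms by (simp add: y_def add_divide_distrib binomial_sum_rescale)
qed

lemma piecewise_appell_euler_fun: "piecewise_appell euler_fun"
  using piecewise_appell_euler_fun_rescale[of 1] by simp

lemma sum_binomial_Suc:
  "(\<Sum>k\<le>Suc n. real (Suc n choose k) * g k) =
   (\<Sum>k\<le>n. real (n choose k) * g k) + (\<Sum>k\<le>n. real (n choose k) * g (Suc k))"
proof -
  have "(\<Sum>k\<le>Suc n. real (Suc n choose k) * g k) =
      real (Suc n choose 0) * g 0 + (\<Sum>k\<le>n. real (Suc n choose Suc k) * g (Suc k))"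
    by (rule sum.atMost_Suc_shift)
  also have "\<dots> = (g 0 + (\<Sum>k\<le>n. real (n choose Suc k) * g (Suc k))) +
      (\<Sum>k\<le>n. real (n choose k) * g (Suc k))"
    by (simp add: sum.distrib algebra_simps)
  also have "g 0 + (\<Sum>k\<le>n. real (n choose Suc k) * g (Suc k)) = (\<Sum>k\<le>Suc n. real (n choose k) * g k)"
    by (simp only: sum.atMost_Suc_shift) simp
  finally show ?thesis
    by simp
qed

text \<open>In terms of generating functions this is the operator \<open>w - \<partial>\<^sub>t\<close>, which preserves
  \<open>F(w + h, t) = F(w, t) e\<^sup>h\<^sup>t\<close>.\<close>
lemma piecewise_appell_var_mult_minus_Suc:
  assumes "piecewise_appell f"
  shows "piecewise_appell (\<lambda>n w. w * f n w - f (Suc n) w)"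
  unfolding piecewise_appell_def
proof (intro allI impI)
  fix W :: int and n :: nat and \<omega> :: real
  assume "0 \<le> \<omega>" and \<omega>: "\<omega> < 1 \<or> \<omega> = 1 \<and> 0 < n"
  let ?y = "of_int W :: real"
  have f: "f n (?y + \<omega>) = (\<Sum>k\<le>n. real (n choose k) * f k ?y * \<omega> ^ (n - k))"
    using piecewise_appellD[OF assms \<open>0 \<le> \<omega>\<close> \<omega>] .
  have "f (Suc n) (?y + \<omega>) = (\<Sum>k\<le>Suc n. real (Suc n choose k) * f k ?y * \<omega> ^ (Suc n - k))"
    using piecewise_appellD[OF assms \<open>0 \<le> \<omega>\<close>] \<omega> by auto
  also have "\<dots> = (\<Sum>k\<le>n. real (n choose k) * (f k ?y * (\<omega> * \<omega> ^ (n - k)))) +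
      (\<Sum>k\<le>n. real (n choose k) * (f (Suc k) ?y * \<omega> ^ (n - k)))"
    using sum_binomial_Suc[of n "\<lambda>k. f k ?y * \<omega> ^ (Suc n - k)"]
    by (simp add: mult.assoc Suc_diff_le)
  finally show "(?y + \<omega>) * f n (?y + \<omega>) - f (Suc n) (?y + \<omega>) =
      (\<Sum>k\<le>n. real (n choose k) * (?y * f k ?y - f (Suc k) ?y) * \<omega> ^ (n - k))"
    unfolding f by (simp add: algebra_simps sum_distrib_left sum_subtractf sum.distrib)
qed

lemma piecewise_appell_constant:
  assumes pa: "piecewise_appell f"
    and lower: "\<And>k w. k < n \<Longrightarrow> 0 \<le> w \<Longrightarrow> w < L \<Longrightarrow> f k w = 0"
    and no_jump: "\<And>W::nat. n = 0 \<Longrightarrow> real W + 1 < L \<Longrightarrow> f n (real W + 1) = f n (real W)"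
    and "0 \<le> w" "w < L"
  shows "f n w = f n 0"
proof -
  have cell: "f n (real W + \<omega>) = f n (real W)"
    if "real W < L" "0 \<le> \<omega>" "\<omega> < 1 \<or> \<omega> = 1 \<and> 0 < n" for W :: nat and \<omega>
  proof -
    have "f n (real W + \<omega>) = (\<Sum>k\<le>n. real (n choose k) * f k (real W) * \<omega> ^ (n - k))"
      using piecewise_appellD[OF pa that(2,3), of "int W"] by simp
    also have "\<dots> = (\<Sum>k<n. real (n choose k) * f k (real W) * \<omega> ^ (n - k)) + f n (real W)"
      by (simp add: lessThan_Suc_atMost[symmetric])
    also have "(\<Sum>k<n. real (n choose k) * f k (real W) * \<omega> ^ (n - k)) = 0"
      using lower that(1) by simp
    finally show ?thesis
      by simp
  qed
  have step: "f n (real W + 1) = f n (real W)" if "real W + 1 < L" for W :: nat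
    using cell[of W 1] no_jump[of W] that by (cases n) auto
  have at_nat: "f n (real W) = f n 0" if "real W < L" for W :: nat
    using that by (induction W) (auto simp: step[simplified add.commute])
  define W where "W = nat \<lfloor>w\<rfloor>"
  have W: "real W = of_int \<lfloor>w\<rfloor>"
    using \<open>0 \<le> w\<close> by (simp add: W_def)
  then have "w = real W + frac w"
    by (simp add: frac_def)
  moreover have "real W < L"
    using W \<open>w < L\<close> of_int_floor_le[of w] by linarith
  ultimately show ?thesis
    using cell[of W "frac w"] at_nat[of W] frac_lt_1[of w] by simp
qed

section \<open>Dedekind-type sums\<close>

definition dedekind_euler_sum :: "nat \<Rightarrow> nat \<Rightarrow> nat \<Rightarrow> real \<Rightarrow> real" where
  "dedekind_euler_sum b m n w = real b * real m ^ n *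
     (\<Sum>\<mu><m. (-1) ^ \<mu> * euler_fun n ((real b * real \<mu> + w) / real m) * (real \<mu> - real m / 2))"

lemma piecewise_appell_dedekind_euler_sum:
  assumes "0 < m"
  shows "piecewise_appell (dedekind_euler_sum b m)"
proof -
  let ?g = "\<lambda>n y. real m ^ n * euler_fun n (y / real m)"
  have "piecewise_appell (\<lambda>n w. \<Sum>\<mu><m. (real b * (-1) ^ \<mu> * (real \<mu> - real m / 2)) *
      ?g n (real b * real \<mu> + w))"
    by (intro piecewise_appell_sum piecewise_appell_cmult piecewise_appell_shift
        piecewise_appell_euler_fun_rescale assms) auto
  moreover have "dedekind_euler_sum b m = (\<lambda>n w. \<Sum>\<mu><m. (real b * (-1) ^ \<mu> * (real \<mu> - real m / 2)) *
      ?g n (real b * real \<mu> + w))"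
    by (simp add: fun_eq_iff dedekind_euler_sum_def sum_distrib_left mult_ac)
  ultimately show ?thesis
    by simp
qed

lemma sum_lessThan_Suc_shift': "(\<Sum>\<nu><m. f (Suc \<nu>)) = (\<Sum>\<nu><m. f \<nu>) + f m - (f 0 :: real)"
  using sum.lessThan_Suc_shift[of f m] sum.lessThan_Suc[of f m] by simp

lemma dedekind_euler_sum_add_modulus:
  assumes "0 < m"
  shows "dedekind_euler_sum b m n (w + real m) = - dedekind_euler_sum b m n w"
proof -
  have "(real b * real \<mu> + (w + real m)) / real m = (real b * real \<mu> + w) / real m + 1" for \<mu>
    using assms by (simp add: field_simps)
  then show ?thesis
    by (simp add: dedekind_euler_sum_def euler_fun_add_1 sum_negf)
qed

lemma dedekind_euler_sum_add_multiplier: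
  assumes "odd b" "odd m" "coprime b m"
  shows "dedekind_euler_sum b m n (w + real b) =
    - dedekind_euler_sum b m n w - real b * real m ^ Suc n * euler_fun n (w / real m)
    + real b * euler_fun n w"
proof -
  have m: "real m > 0"
    using assms(2) by (auto elim: oddE)
  define h where "h \<nu> = (-1) ^ \<nu> * euler_fun n ((real b * real \<nu> + w) / real m)" for \<nu>
  define q where "q \<nu> = real \<nu> - real m / 2" for \<nu>
  have h_m: "h m = h 0"
  proof -
    have "(real b * real m + w) / real m = w / real m + real b"
      using m by (simp add: field_simps)
    then show ?thesis
      using assms(1,2) by (simp add: h_def euler_fun_add_nat)
  qed
  have sum_h: "(\<Sum>\<nu><m. h \<nu>) = euler_fun n w / real m ^ n"
    using euler_fun_mult_odd[OF assms(2,1,3)] by (simp add: h_def)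
  have "dedekind_euler_sum b m n (w + real b) =
      real b * real m ^ n * ((\<Sum>\<nu><m. h (Suc \<nu>)) - (\<Sum>\<nu><m. h (Suc \<nu>) * q (Suc \<nu>)))"
    unfolding dedekind_euler_sum_def sum_subtractf[symmetric]
    by (intro arg_cong[where f = "\<lambda>s. real b * real m ^ n * s"] sum.cong)
      (simp_all add: h_def q_def algebra_simps)
  also have "\<dots> = real b * real m ^ n * (\<Sum>\<nu><m. h \<nu>) - real b * real m ^ n * (\<Sum>\<nu><m. h \<nu> * q \<nu>)
      - real b * real m ^ Suc n * h 0"
  proof -
    have "(\<Sum>\<nu><m. h (Suc \<nu>)) = (\<Sum>\<nu><m. h \<nu>)"
      using sum_lessThan_Suc_shift'[of h m] h_m by simp
    moreover have "(\<Sum>\<nu><m. h (Suc \<nu>) * q (Suc \<nu>)) = (\<Sum>\<nu><m. h \<nu> * q \<nu>) + real m * h 0"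
      using sum_lessThan_Suc_shift'[of "\<lambda>\<nu>. h \<nu> * q \<nu>" m] h_m by (simp add: q_def algebra_simps)
    ultimately show ?thesis
      by (simp add: algebra_simps)
  qed
  also have "\<dots> = - dedekind_euler_sum b m n w - real b * real m ^ Suc n * euler_fun n (w / real m)
      + real b * euler_fun n w"
  proof -
    have "dedekind_euler_sum b m n w = real b * real m ^ n * (\<Sum>\<nu><m. h \<nu> * q \<nu>)"
      by (simp add: dedekind_euler_sum_def h_def q_def mult_ac)
    moreover have "h 0 = euler_fun n (w / real m)"
      by (simp add: h_def)
    ultimately show ?thesis
      unfolding sum_h using m by (simp add: field_simps)
  qed
  finally show ?thesis .
qed

lemma S5_eq_dedekind_euler_sum:
  assumes "odd b" "odd m" "coprime b m" "0 \<le> u" "u < 1"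
  shows "real b * real m ^ Suc n * S5 (Suc n) b m v u =
    dedekind_euler_sum b m n (real b * u + real m * v) +
    real b * u * euler_fun n (real b * u + real m * v)"
proof -
  have m: "real m > 0"
    using assms(2) by (auto elim: oddE)
  define w where "w = real b * u + real m * v"
  define e where "e \<mu> = (-1) ^ \<mu> * euler_fun n ((real b * real \<mu> + w) / real m)" for \<mu>
  have summand: "real m * ((-1) ^ \<mu> * euler_fun n (real b * ((real \<mu> + u) / real m) + v) *
      bernoulli_fun 1 ((real \<mu> + u) / real m)) = e \<mu> * (real \<mu> - real m / 2) + u * e \<mu>"
    if "\<mu> < m" for \<mu>
  proof -
    have "(real \<mu> + u) / real m < 1"
      using that \<open>u < 1\<close> m by (simp add: field_simps)
    then have B: "bernoulli_fun 1 ((real \<mu> + u) / real m) = (real \<mu> + u) / real m - 1 / 2"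
      unfolding bernoulli_fun_1 using \<open>0 \<le> u\<close> by (simp add: frac_eq)
    have A: "real b * ((real \<mu> + u) / real m) + v = (real b * real \<mu> + w) / real m"
      using m by (simp add: w_def field_simps)
    show ?thesis
      unfolding A B e_def using m by (simp add: field_simps)
  qed
  have "real b * real m ^ Suc n * S5 (Suc n) b m v u = real b * real m ^ n * (\<Sum>\<mu><m. real m *
      ((-1) ^ \<mu> * euler_fun n (real b * ((real \<mu> + u) / real m) + v) * bernoulli_fun 1 ((real \<mu> + u) / real m)))"
    by (simp add: S5_def sum_distrib_left mult_ac)
  also have "\<dots> = real b * real m ^ n * (\<Sum>\<mu><m. e \<mu> * (real \<mu> - real m / 2) + u * e \<mu>)"
    using summand by (intro arg_cong[where f = "\<lambda>s. real b * real m ^ n * s"] sum.cong) simp_all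
  also have "\<dots> = dedekind_euler_sum b m n w + real b * u * (real m ^ n * (\<Sum>\<mu><m. e \<mu>))"
    unfolding sum.distrib by (simp add: dedekind_euler_sum_def e_def sum_distrib_left algebra_simps)
  also have "real m ^ n * (\<Sum>\<mu><m. e \<mu>) = euler_fun n w"
    using euler_fun_mult_odd[OF assms(2,1,3), of n w] m by (simp add: e_def)
  finally show ?thesis
    by (simp add: w_def)
qed

section \<open>The reciprocity law\<close>

definition euler_convolution :: "nat \<Rightarrow> nat \<Rightarrow> real \<Rightarrow> nat \<Rightarrow> real \<Rightarrow> real" where
  "euler_convolution a c z n x = real a * real c *
     (\<Sum>k\<le>n. real (n choose k) * (real a ^ k * euler_poly k z) * (real c ^ (n - k) * euler_poly (n - k) x))"

lemma appell_euler_convolution: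
  assumes "0 < c"
  shows "appell (\<lambda>n w. euler_convolution a c z n ((w - real a * z) / real c))"
proof -
  have "appell (\<lambda>n y. real c ^ n * euler_poly n (y / real c))"
    using assms by (intro appell_rescale appell_euler_poly) simp
  then have "appell (\<lambda>n w. real a * real c * (\<Sum>k\<le>n. real (n choose k) * (real a ^ k * euler_poly k z) *
      (real c ^ (n - k) * euler_poly (n - k) ((w + - (real a * z)) / real c))))"
    by (intro appell_cmult appell_convolution appell_shift)
  then show ?thesis
    by (simp add: euler_convolution_def)
qed

text \<open>For \<open>x, z \<in> [0, 1)\<close> and \<open>w = a z + c x\<close> this is the difference of the two sides
  of the reciprocity law in degree \<open>n + 1\<close>.\<close>
definition reciprocity_defect :: "nat \<Rightarrow> nat \<Rightarrow> real \<Rightarrow> nat \<Rightarrow> real \<Rightarrow> real" where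
  "reciprocity_defect a c z n w = dedekind_euler_sum a c n w + dedekind_euler_sum c a n w +
     (w * euler_fun n w - euler_fun (Suc n) w) + euler_convolution a c z n ((w - real a * z) / real c) / 2"

lemma piecewise_appell_reciprocity_defect:
  assumes "0 < a" "0 < c"
  shows "piecewise_appell (reciprocity_defect a c z)"
proof -
  have "piecewise_appell (\<lambda>n w. dedekind_euler_sum a c n w + dedekind_euler_sum c a n w +
      (w * euler_fun n w - euler_fun (Suc n) w) +
      1 / 2 * euler_convolution a c z n ((w - real a * z) / real c))"
    using assms
    by (intro piecewise_appell_add piecewise_appell_dedekind_euler_sum piecewise_appell_cmult
        piecewise_appell_var_mult_minus_Suc piecewise_appell_euler_fun
        appell_imp_piecewise_appell appell_euler_convolution)
  then show ?thesis
    by (simp add: reciprocity_defect_def[abs_def])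
qed

lemma reciprocity_defect_add_c:
  assumes "odd a" "odd c" "coprime a c" "0 \<le> z" "z < 1"
  shows "reciprocity_defect a c z n (real a * z + real c) = - reciprocity_defect a c z n (real a * z)"
proof -
  let ?w = "real a * z"
  have a: "real a > 0" and c: "real c > 0"
    using assms(1,2) by (auto elim: oddE)
  have P_ca: "dedekind_euler_sum c a n (?w + real c) = - dedekind_euler_sum c a n ?w
      - real c * real a ^ Suc n * euler_poly n z + real c * euler_fun n ?w"
    using dedekind_euler_sum_add_multiplier[OF assms(2,1), of n ?w] assms(3-5) a
    by (simp add: coprime_commute euler_fun_eq_euler_poly)
  have P_ac: "dedekind_euler_sum a c n (?w + real c) = - dedekind_euler_sum a c n ?w"
    using c by (simp add: dedekind_euler_sum_add_modulus)
  have E: "euler_fun k (?w + real c) = - euler_fun k ?w" for k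
    using assms(2) by (simp add: euler_fun_add_nat)
  have T: "euler_convolution a c z n 1 + euler_convolution a c z n 0 =
      2 * real a ^ Suc n * real c * euler_poly n z"
  proof -
    define F where "F k = real (n choose k) * (real a ^ k * euler_poly k z) * real c ^ (n - k)" for k
    have conv: "euler_convolution a c z n x = real a * real c * (\<Sum>k\<le>n. F k * euler_poly (n - k) x)" for x
      by (simp add: euler_convolution_def F_def mult_ac)
    have "(\<Sum>k\<le>n. F k * euler_poly (n - k) 1) + (\<Sum>k\<le>n. F k * euler_poly (n - k) 0) =
        (\<Sum>k\<le>n. if k = n then 2 * F k else 0)"
      unfolding sum.distrib[symmetric]
    proof (intro sum.cong refl)
      fix k assume "k \<in> {..n}"
      then show "F k * euler_poly (n - k) 1 + F k * euler_poly (n - k) 0 = (if k = n then 2 * F k else 0)"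
        using euler_poly_add_1[of "n - k" 0] by (auto simp: power_0_left simp flip: distrib_left)
    qed
    then show ?thesis
      by (simp add: conv F_def algebra_simps flip: distrib_left)
  qed
  show ?thesis
    unfolding reciprocity_defect_def P_ac P_ca E using c T by (simp add: algebra_simps)
qed

lemma unique_root_mod:
  fixes b m s :: nat
  assumes "0 < m" "coprime b m"
  obtains \<mu>0 where "\<mu>0 < m" "\<And>\<mu>. \<mu> < m \<Longrightarrow> m dvd b * \<mu> + s \<longleftrightarrow> \<mu> = \<mu>0"
proof -
  let ?h = "\<lambda>\<mu>. nat ((int b * int \<mu> + int s) mod int m)"
  have h: "?h \<mu> = (b * \<mu> + s) mod m" for \<mu>
    by (metis nat_int of_nat_add of_nat_mult of_nat_mod)
  have bij: "bij_betw ?h {..<m} {..<m}"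
    by (rule bij_betw_affine_mod[OF assms])
  then have "0 \<in> ?h ` {..<m}"
    using assms(1) by (simp add: bij_betw_def)
  then obtain \<mu>0 where "\<mu>0 < m" "?h \<mu>0 = 0"
    by auto
  moreover have "?h \<mu> = ?h \<mu>0 \<longleftrightarrow> \<mu> = \<mu>0" if "\<mu> < m" for \<mu>
    using bij that \<open>\<mu>0 < m\<close> by (auto simp: bij_betw_def inj_on_def)
  ultimately show ?thesis
    using that h by (simp add: dvd_eq_mod_eq_0)
qed

lemma complementary_roots:
  fixes a c \<mu> \<nu> N :: nat
  assumes "coprime a c" "\<mu> < c" "\<nu> < a" "c dvd a * \<mu> + N" "a dvd c * \<nu> + N" "0 < N" "N < a + c"
  shows "a * \<mu> + c * \<nu> + N = a * c"
proof -
  define S where "S = a * \<mu> + c * \<nu> + N"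
  have "a dvd (c * \<nu> + N) + a * \<mu>" "c dvd (a * \<mu> + N) + c * \<nu>"
    using assms(4,5) by (simp_all add: dvd_add)
  then have "a dvd S" "c dvd S"
    by (simp_all add: S_def add_ac)
  then obtain k where k: "S = a * c * k"
    using assms(1) divides_mult by blast
  have "a * Suc \<mu> \<le> a * c" "c * Suc \<nu> \<le> c * a"
    using assms(2,3) by (simp_all only: mult_le_mono2 Suc_leI)
  then have "S < a * c * 2"
    using assms(7) by (simp add: S_def algebra_simps)
  then have "k < 2"
    using k by (metis mult_less_cancel1)
  moreover have "k \<noteq> 0"
    using assms(6) k by (metis S_def add_gr_0 mult_0_right not_less0)
  ultimately have "k = 1"
    by simp
  then show ?thesis
    using k by (simp add: S_def)
qed

lemma minus_one_power_odd_add: "odd (i + j) \<Longrightarrow> (-1::real) ^ i = - ((-1) ^ j)"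
  by (auto simp: minus_one_power_iff)

lemma euler_fun_0_of_nat_divide: "euler_fun 0 (real k / real m) = (-1) ^ (k div m)"
  using floor_divide_of_nat_eq[of k m, where 'a = real] by (simp add: euler_fun_def)

lemma euler_fun_0_jump:
  "euler_fun 0 (real (Suc N) / real m) - euler_fun 0 (real N / real m) =
    (if m dvd Suc N then 2 * (-1) ^ (Suc N div m) else 0)"
proof (cases "m dvd Suc N")
  case True
  then have "Suc N div m = Suc (N div m)"
    by (simp add: div_Suc dvd_eq_mod_eq_0)
  then show ?thesis
    unfolding euler_fun_0_of_nat_divide using True by simp
next
  case False
  then have "Suc N div m = N div m"
    by (simp add: div_Suc dvd_eq_mod_eq_0)
  then show ?thesis
    unfolding euler_fun_0_of_nat_divide using False by simp
qed

lemma dedekind_euler_sum_0_jump: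
  assumes "\<mu>0 < m" and root: "\<And>\<mu>. \<mu> < m \<Longrightarrow> m dvd b * \<mu> + Suc W \<longleftrightarrow> \<mu> = \<mu>0"
  shows "dedekind_euler_sum b m 0 (real W + 1) - dedekind_euler_sum b m 0 (real W) =
    2 * real b * (-1) ^ (\<mu>0 + (b * \<mu>0 + Suc W) div m) * (real \<mu>0 - real m / 2)"
proof -
  have "dedekind_euler_sum b m 0 (real W + 1) - dedekind_euler_sum b m 0 (real W) =
      real b * (\<Sum>\<mu><m. (-1) ^ \<mu> * (euler_fun 0 (real (Suc (b * \<mu> + W)) / real m) -
        euler_fun 0 (real (b * \<mu> + W) / real m)) * (real \<mu> - real m / 2))"
  proof -
    have P: "dedekind_euler_sum b m 0 (real W + 1) = real b *
        (\<Sum>\<mu><m. (-1) ^ \<mu> * euler_fun 0 (real (Suc (b * \<mu> + W)) / real m) * (real \<mu> - real m / 2))"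
      "dedekind_euler_sum b m 0 (real W) = real b *
        (\<Sum>\<mu><m. (-1) ^ \<mu> * euler_fun 0 (real (b * \<mu> + W) / real m) * (real \<mu> - real m / 2))"
      by (simp_all add: dedekind_euler_sum_def ac_simps)
    show ?thesis
      unfolding P right_diff_distrib[symmetric] sum_subtractf[symmetric]
      by (intro arg_cong[where f = "\<lambda>s. real b * s"] sum.cong refl)
        (simp only: left_diff_distrib right_diff_distrib)
  qed
  also have "\<dots> = real b * (\<Sum>\<mu><m. if \<mu> = \<mu>0
      then (-1) ^ \<mu> * (2 * (-1) ^ (Suc (b * \<mu> + W) div m)) * (real \<mu> - real m / 2) else 0)"
  proof (intro arg_cong[where f = "\<lambda>s. real b * s"] sum.cong refl)
    fix \<mu> assume "\<mu> \<in> {..<m}"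
    then have "m dvd Suc (b * \<mu> + W) \<longleftrightarrow> \<mu> = \<mu>0"
      using root by simp
    then show "(-1) ^ \<mu> * (euler_fun 0 (real (Suc (b * \<mu> + W)) / real m) -
        euler_fun 0 (real (b * \<mu> + W) / real m)) * (real \<mu> - real m / 2) =
      (if \<mu> = \<mu>0 then (-1) ^ \<mu> * (2 * (-1) ^ (Suc (b * \<mu> + W) div m)) * (real \<mu> - real m / 2) else 0)"
      unfolding euler_fun_0_jump by auto
  qed
  finally show ?thesis
    using assms(1) by (simp add: power_add)
qed

lemma reciprocity_defect_0_no_jump:
  assumes "odd a" "odd c" "coprime a c" "W + 2 \<le> a + c"
  shows "reciprocity_defect a c z 0 (real W + 1) = reciprocity_defect a c z 0 (real W)"
proof -
  have a: "0 < a" and c: "0 < c"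
    using assms(1,2) by (auto elim: oddE)
  obtain \<mu>0 where \<mu>0: "\<mu>0 < c" "\<And>\<mu>. \<mu> < c \<Longrightarrow> c dvd a * \<mu> + Suc W \<longleftrightarrow> \<mu> = \<mu>0"
    using unique_root_mod[OF c assms(3)] by blast
  obtain \<nu>0 where \<nu>0: "\<nu>0 < a" "\<And>\<nu>. \<nu> < a \<Longrightarrow> a dvd c * \<nu> + Suc W \<longleftrightarrow> \<nu> = \<nu>0"
    using unique_root_mod[OF a, of c] assms(3) by (metis coprime_commute)
  have S: "a * \<mu>0 + c * \<nu>0 + Suc W = a * c"
    using assms(3,4) \<mu>0 \<nu>0 by (intro complementary_roots) auto
  then have "a * \<mu>0 + Suc W = c * (a - \<nu>0)" "c * \<nu>0 + Suc W = a * (c - \<mu>0)"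
    by (simp_all add: diff_mult_distrib2 algebra_simps)
  then have div: "(a * \<mu>0 + Suc W) div c = a - \<nu>0" "(c * \<nu>0 + Suc W) div a = c - \<mu>0"
    using a c by simp_all
  have "odd (a * \<mu>0 + c * \<nu>0 + Suc W)"
    using S assms(1,2) by simp
  then have "even (\<mu>0 + \<nu>0 + W)"
    using assms(1,2) by simp
  then have sign: "(-1::real) ^ (\<mu>0 + (a - \<nu>0)) = - ((-1) ^ W)" "(-1::real) ^ (\<nu>0 + (c - \<mu>0)) = - ((-1) ^ W)"
    using assms(1,2) \<mu>0(1) \<nu>0(1) by (intro minus_one_power_odd_add, presburger)+
  have Sr: "real a * real \<mu>0 + real c * real \<nu>0 = real a * real c - real W - 1"
    using arg_cong[OF S, of real] by simp
  have conv: "euler_convolution a c z 0 x = real a * real c" for x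
    by (simp add: euler_convolution_def)
  have J1: "dedekind_euler_sum a c 0 (real W + 1) - dedekind_euler_sum a c 0 (real W) =
      - 2 * real a * (-1) ^ W * (real \<mu>0 - real c / 2)"
    using dedekind_euler_sum_0_jump[OF \<mu>0] unfolding div sign by simp
  have J2: "dedekind_euler_sum c a 0 (real W + 1) - dedekind_euler_sum c a 0 (real W) =
      - 2 * real c * (-1) ^ W * (real \<nu>0 - real a / 2)"
    using dedekind_euler_sum_0_jump[OF \<nu>0] unfolding div sign by simp
  have E: "euler_fun 0 (real W + 1) = - ((-1) ^ W)" "euler_fun 0 (real W) = (-1) ^ W"
    "euler_fun 1 (real W + 1) = (-1) ^ W / 2" "euler_fun 1 (real W) = - ((-1) ^ W) / 2"
    unfolding euler_fun_add_1 euler_fun_of_nat euler_poly_1_0 by simp_all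
  have "reciprocity_defect a c z 0 (real W + 1) - reciprocity_defect a c z 0 (real W) =
      (dedekind_euler_sum a c 0 (real W + 1) - dedekind_euler_sum a c 0 (real W)) +
      (dedekind_euler_sum c a 0 (real W + 1) - dedekind_euler_sum c a 0 (real W)) +
      ((real W + 1) * euler_fun 0 (real W + 1) - real W * euler_fun 0 (real W)) -
      (euler_fun 1 (real W + 1) - euler_fun 1 (real W))"
    unfolding reciprocity_defect_def conv by (simp add: algebra_simps)
  also have "\<dots> = - 2 * (-1) ^ W * (real a * real \<mu>0 + real c * real \<nu>0 - real a * real c + real W + 1)"
    unfolding J1 J2 E by (simp add: algebra_simps)
  also have "\<dots> = 0"
    unfolding Sr by simp
  finally show ?thesis
    by simp
qed

lemma reciprocity_defect_eq_0:
  assumes "odd a" "odd c" "coprime a c" "0 \<le> z" "z < 1" "0 \<le> w" "w < real a + real c"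
  shows "reciprocity_defect a c z n w = 0"
  using assms(6,7)
proof (induction n arbitrary: w rule: less_induct)
  case (less n)
  have a: "0 < a" and c: "0 < c"
    using assms(1,2) by (auto elim: oddE)
  have flat: "reciprocity_defect a c z n v = reciprocity_defect a c z n 0"
    if "0 \<le> v" "v < real a + real c" for v
  proof (rule piecewise_appell_constant[OF piecewise_appell_reciprocity_defect[OF a c]])
    show "reciprocity_defect a c z n (real W + 1) = reciprocity_defect a c z n (real W)"
      if "n = 0" "real W + 1 < real a + real c" for W
      using that reciprocity_defect_0_no_jump[OF assms(1-3)] by simp
  qed (use less.IH that in auto)
  have "real a * z < real a"
    using a assms(5) by simp
  then have "reciprocity_defect a c z n (real a * z + real c) = reciprocity_defect a c z n 0"
    "reciprocity_defect a c z n (real a * z) = reciprocity_defect a c z n 0"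
    using assms(4) by (intro flat; simp)+
  with reciprocity_defect_add_c[OF assms(1-5), of n] have "reciprocity_defect a c z n 0 = 0"
    by linarith
  with flat less.prems show ?case
    by simp
qed

lemma sum_eq_euler_convolution:
  assumes "0 \<le> x" "x < 1" "0 \<le> z" "z < 1"
  shows "(\<Sum>j=1..Suc n. real ((Suc n - 1) choose (j - 1)) * real a ^ (Suc n + 1 - j) * real c ^ j *
      euler_fun (Suc n - j) z * euler_fun (j - 1) x) = euler_convolution a c z n x"
    (is "(\<Sum>j=1..Suc n. ?g j) = _")
proof -
  have "(\<Sum>j=1..Suc n. ?g j) = (\<Sum>k\<le>n. ?g (Suc n - k))"
    by (rule sum.reindex_bij_witness[where i = "\<lambda>j. Suc n - j" and j = "\<lambda>j. Suc n - j"]) auto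
  also have "\<dots> = euler_convolution a c z n x"
    unfolding euler_convolution_def sum_distrib_left
  proof (intro sum.cong refl)
    fix k assume "k \<in> {..n}"
    then show "?g (Suc n - k) = real a * real c * (real (n choose k) * (real a ^ k * euler_poly k z) *
        (real c ^ (n - k) * euler_poly (n - k) x))"
      using assms by (simp add: euler_fun_eq_euler_poly binomial_symmetric[symmetric] Suc_diff_le mult_ac)
  qed
  finally show ?thesis .
qed

lemma reciprocity_unit_square:
  assumes "odd a" "odd c" "coprime a c" "1 \<le> p" "0 \<le> x" "x < 1" "0 \<le> z" "z < 1"
  shows "real a * real c ^ p * S5 p a c x z + real c * real a ^ p * S5 p c a z x =
    - (1/2) * (\<Sum>j=1..p. real ((p - 1) choose (j - 1)) * real a ^ (p + 1 - j) * real c ^ j *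
        euler_fun (p - j) z * euler_fun (j - 1) x)
    + euler_fun p (real a * z + real c * x)"
proof -
  obtain n where p: "p = Suc n"
    using assms(4) by (cases p) auto
  define w where "w = real a * z + real c * x"
  have a: "real a > 0" and c: "real c > 0"
    using assms(1,2) by (auto elim: oddE)
  have "real a * z < real a" "real c * x < real c"
    using a c assms(6,8) by simp_all
  then have "0 \<le> w" "w < real a + real c"
    using assms(5,7) by (simp_all add: w_def)
  then have "reciprocity_defect a c z n w = 0"
    using assms(1-3,7,8) by (intro reciprocity_defect_eq_0)
  moreover have "(w - real a * z) / real c = x"
    using c by (simp add: w_def)
  ultimately have "dedekind_euler_sum a c n w + dedekind_euler_sum c a n w +
      (w * euler_fun n w - euler_fun (Suc n) w) + euler_convolution a c z n x / 2 = 0"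
    unfolding reciprocity_defect_def by simp
  moreover have "w * euler_fun n w = real a * z * euler_fun n w + real c * x * euler_fun n w"
    by (simp add: w_def algebra_simps)
  moreover have "real a * real c ^ p * S5 p a c x z = dedekind_euler_sum a c n w + real a * z * euler_fun n w"
    using S5_eq_dedekind_euler_sum[OF assms(1-3,7,8), of n x] by (simp add: p w_def)
  moreover have "real c * real a ^ p * S5 p c a z x = dedekind_euler_sum c a n w + real c * x * euler_fun n w"
    using S5_eq_dedekind_euler_sum[OF assms(2,1) _ assms(5,6), of n z] assms(3)
    by (simp add: p w_def coprime_commute add.commute)
  moreover have "(\<Sum>j=1..p. real ((p - 1) choose (j - 1)) * real a ^ (p + 1 - j) * real c ^ j *
      euler_fun (p - j) z * euler_fun (j - 1) x) = euler_convolution a c z n x"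
    unfolding p by (rule sum_eq_euler_convolution[OF assms(5-8)])
  ultimately show ?thesis
    unfolding w_def[symmetric] p by linarith
qed

lemma antiperiodic_eq_0:
  fixes f :: "real \<Rightarrow> real"
  assumes antiperiodic: "\<And>t. f (t + 1) = - f t" and "\<And>t. 0 \<le> t \<Longrightarrow> t < 1 \<Longrightarrow> f t = 0"
  shows "f t = 0"
proof -
  have "f (frac t + of_int k) = 0" for k
  proof (induction k rule: int_induct[of _ 0])
    case base
    then show ?case
      using assms(2)[OF frac_ge_0 frac_lt_1] by simp
  next
    case (step1 i)
    have "frac t + of_int (i + 1) = (frac t + of_int i) + 1"
      by simp
    then show ?case
      using antiperiodic[of "frac t + of_int i"] step1(2) by (simp add: add.assoc)
  next
    case (step2 i)
    have "frac t + of_int i = (frac t + of_int (i - 1)) + 1"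
      by simp
    then show ?case
      using antiperiodic[of "frac t + of_int (i - 1)"] step2(2) by simp
  qed
  from this[of "\<lfloor>t\<rfloor>"] show ?thesis
    by (simp add: frac_def)
qed

lemma antiperiodic2_eq_0:
  fixes F :: "real \<Rightarrow> real \<Rightarrow> real"
  assumes "\<And>x z. F (x + 1) z = - F x z" "\<And>x z. F x (z + 1) = - F x z"
    and "\<And>x z. 0 \<le> x \<Longrightarrow> x < 1 \<Longrightarrow> 0 \<le> z \<Longrightarrow> z < 1 \<Longrightarrow> F x z = 0"
  shows "F x z = 0"
proof (rule antiperiodic_eq_0[of "\<lambda>z. F x z"])
  fix z :: real assume "0 \<le> z" "z < 1"
  show "F x z = 0"
    by (rule antiperiodic_eq_0[of "\<lambda>x. F x z"]) (use assms(1,3) \<open>0 \<le> z\<close> \<open>z < 1\<close> in auto)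
qed (rule assms(2))

lemma bernoulli_fun_add_1: "bernoulli_fun n (y + 1) = bernoulli_fun n y"
  by (simp add: bernoulli_fun_def)

lemma S5_add_1_left: "S5 p b m (v + 1) u = - S5 p b m v u"
  by (simp add: S5_def add.assoc[symmetric] euler_fun_add_1 sum_negf)

lemma S5_add_1_right:
  assumes "odd b" "odd m"
  shows "S5 p b m v (u + 1) = - S5 p b m v u"
proof -
  have m: "real m > 0"
    using assms(2) by (auto elim: oddE)
  define f where "f \<mu> = (-1) ^ \<mu> * euler_fun (p - 1) (real b * ((real \<mu> + u) / real m) + v) *
      bernoulli_fun 1 ((real \<mu> + u) / real m)" for \<mu>
  have "f m = f 0"
  proof -
    have shift: "(real m + u) / real m = (real 0 + u) / real m + 1"
      "real b * ((real 0 + u) / real m + 1) + v = (real b * ((real 0 + u) / real m) + v) + real b"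
      using m by (simp_all add: field_simps)
    show ?thesis
      unfolding f_def shift euler_fun_add_nat bernoulli_fun_add_1 using assms by simp
  qed
  moreover have "S5 p b m v (u + 1) = - (\<Sum>\<mu><m. f (Suc \<mu>))"
    by (simp add: S5_def f_def add_ac flip: sum_negf)
  moreover have "S5 p b m v u = (\<Sum>\<mu><m. f \<mu>)"
    by (simp add: S5_def f_def)
  ultimately show ?thesis
    using sum_lessThan_Suc_shift'[of f m] by simp
qed

theorem corollary3:
  fixes a c p :: nat and x z :: real
  assumes "a > 0" "c > 0" "odd a" "odd c" "coprime a c" "p \<ge> 1"
  shows "real a * real c ^ p * S5 p a c x z + real c * real a ^ p * S5 p c a z x =
    - (1/2) * (\<Sum>j=1..p. real ((p - 1) choose (j - 1)) * real a ^ (p + 1 - j) * real c ^ j *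
        euler_fun (p - j) z * euler_fun (j - 1) x)
    + euler_fun p (real a * z + real c * x)"
proof -
  define F where "F x z = real a * real c ^ p * S5 p a c x z + real c * real a ^ p * S5 p c a z x -
    (- (1/2) * (\<Sum>j=1..p. real ((p - 1) choose (j - 1)) * real a ^ (p + 1 - j) * real c ^ j *
        euler_fun (p - j) z * euler_fun (j - 1) x) + euler_fun p (real a * z + real c * x))" for x z
  have "F x z = 0"
  proof (rule antiperiodic2_eq_0[of F])
    show "F (x + 1) z = - F x z" for x z
    proof -
      have shift: "real a * z + real c * (x + 1) = (real a * z + real c * x) + real c"
        by (simp add: algebra_simps)
      show ?thesis
        unfolding F_def shift using assms(4)
        by (simp add: S5_add_1_left S5_add_1_right[OF assms(4,3)] euler_fun_add_1 euler_fun_add_nat sum_negf)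
    qed
    show "F x (z + 1) = - F x z" for x z
    proof -
      have shift: "real a * (z + 1) + real c * x = (real a * z + real c * x) + real a"
        by (simp add: algebra_simps)
      show ?thesis
        unfolding F_def shift using assms(3)
        by (simp add: S5_add_1_left S5_add_1_right[OF assms(3,4)] euler_fun_add_1 euler_fun_add_nat sum_negf)
    qed
    show "F x z = 0" if "0 \<le> x" "x < 1" "0 \<le> z" "z < 1" for x z
      using reciprocity_unit_square[OF assms(3-6) that] by (simp add: F_def)
  qed
  then show ?thesis
    by (simp add: F_def)
qed

end
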